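(* For any $d\in\mathbb N$, the map $(\mu_1,\mu_2,\Sigma_1,\Sigma_2)\mapsto \mathbb G\big((\mu_1,\Sigma_1),(\mu_2,\Sigma_2)\big)^2$ is jointly convex and continuous on $\mathbb R^d\times\mathbb R^d\times\mathbb S^d_+\times\mathbb S^d_+$.
   Context: $\mathbb S^d_+$ is the cone of symmetric positive semidefinite $d\times d$ matrices; $A^{1/2}$ denotes the unique positive semidefinite square root of $A\in\mathbb S^d_+$. The Gelbrich distance between $(\mu_1,\Sigma_1),(\mu_2,\Sigma_2)\in\mathbb R^d\times\mathbb S^d_+$ is $$\mathbb G\big((\mu_1,\Sigma_1),(\mu_2,\Sigma_2)\big)=\sqrt{\|\mu_1-\mu_2\|^2+\mathrm{Tr}\big[\Sigma_1+\Sigma_2-2\big(\Sigma_2^{1/2}\Sigma_1\Sigma_2^{1/2}\big)^{1/2}\big]}.$$ *)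

theory Defs
  imports "HOL-Analysis.Analysis"
begin

text \<open>Symmetric positive semidefinite real d x d matrices (d = CARD('n)).\<close>
definition psd :: "real^'n^'n \<Rightarrow> bool" where
  "psd A \<longleftrightarrow> transpose A = A \<and> (\<forall>x. 0 \<le> x \<bullet> (A *v x))"

definition psd_set :: "(real^'n^'n) set" where
  "psd_set = {A. psd A}"

definition msqrt :: "real^'n^'n \<Rightarrow> real^'n^'n" where
  "msqrt A = (THE B. psd B \<and> B ** B = A)"

definition gelbrich :: "((real^'n) \<times> (real^'n^'n)) \<Rightarrow> ((real^'n) \<times> (real^'n^'n)) \<Rightarrow> real" where
  "gelbrich p q = (case p of (m1, S1) \<Rightarrow> case q of (m2, S2) \<Rightarrow>
     sqrt ((norm (m1 - m2))\<^sup>2 +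
           trace (S1 + S2 - 2 *\<^sub>R msqrt (msqrt S2 ** S1 ** msqrt S2))))"

end

theory Submission
  imports Defs
begin

text \<open>For PSD \<open>\<Sigma>\<^sub>1, \<Sigma>\<^sub>2\<close> the squared distance is
  \<open>\<parallel>\<mu>\<^sub>1 - \<mu>\<^sub>2\<parallel>\<^sup>2 + tr \<Sigma>\<^sub>1 + tr \<Sigma>\<^sub>2 - 2 F(\<Sigma>\<^sub>1, \<Sigma>\<^sub>2)\<close> with the fidelity
  \<open>F(A, B) = tr (B\<^sup>1\<^sup>/\<^sup>2 A B\<^sup>1\<^sup>/\<^sup>2)\<^sup>1\<^sup>/\<^sup>2\<close>, so it suffices that \<open>F\<close> is jointly concave and continuous.
  For positive definite \<open>A, B\<close> one has the variational formula
  \<open>2 F(A, B) = min {tr (XAX) + tr (X\<^sup>-\<^sup>1 B X\<^sup>-\<^sup>1) | X symmetric invertible}\<close>, exhibiting \<open>F\<close> as a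
  minimum of linear functions, hence concave; the singular case follows by approximating with
  \<open>A + \<epsilon>I\<close>, \<open>B + \<epsilon>I\<close>. Continuity reduces to continuity of the PSD square root, which has a
  closed graph and is locally bounded. The square root itself is built from the spectral theorem,
  proved by maximising the quadratic form over unit vectors of invariant subspaces.\<close>

lemma matrix_vector_mult_sum: "(A::real^'n^'m) *v (\<Sum>i\<in>S. f i) = (\<Sum>i\<in>S. A *v f i)"
  by (induction S rule: infinite_finite_induct) (auto simp: matrix_vector_right_distrib)

lemma sum_matrix_vector_mult: "(\<Sum>i\<in>S. f i :: real^'n^'m) *v x = (\<Sum>i\<in>S. f i *v x)"
  by (induction S rule: infinite_finite_induct) (auto simp: matrix_vector_mult_add_rdistrib)

lemma matrix_add_rdistrib: "((A::real^'n^'m) + B) ** C = A ** C + B ** C"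
  by (simp add: vec_eq_iff matrix_matrix_mult_def sum.distrib distrib_right)

lemma matrix_diff_rdistrib: "((A::real^'n^'m) - B) ** C = A ** C - B ** C"
  by (simp add: vec_eq_iff matrix_matrix_mult_def sum_subtractf left_diff_distrib)

lemma matrix_diff_ldistrib: "(A::real^'n^'m) ** (B - C) = A ** B - A ** C"
  by (simp add: vec_eq_iff matrix_matrix_mult_def sum_subtractf right_diff_distrib)

lemma transpose_add: "transpose ((A::real^'n^'m) + B) = transpose A + transpose B"
  by (simp add: transpose_def vec_eq_iff)

lemma transpose_diff: "transpose ((A::real^'n^'m) - B) = transpose A - transpose B"
  by (simp add: transpose_def vec_eq_iff)

lemma transpose_sum: "transpose (\<Sum>i\<in>S. f i :: real^'n^'m) = (\<Sum>i\<in>S. transpose (f i))"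
  by (induction S rule: infinite_finite_induct) (auto simp: transpose_def vec_eq_iff)

lemma trace_scaleR: "trace (c *\<^sub>R (A::real^'n^'n)) = c * trace A"
  by (simp add: trace_def sum_distrib_left)

lemma trace_transpose_mult_self_nonneg: "0 \<le> trace (transpose (E::real^'n^'n) ** E)"
  by (simp add: trace_def matrix_matrix_mult_def transpose_def sum_nonneg)

lemma invertible_iff_kernel_trivial:
  "invertible (A::real^'n^'n) \<longleftrightarrow> (\<forall>x. A *v x = 0 \<longrightarrow> x = 0)"
  by (metis invertible_left_inverse matrix_left_invertible_ker)

lemma transpose_inverse_eq:
  fixes X Y :: "real^'n^'n"
  assumes "transpose X = X" "X ** Y = mat 1" "Y ** X = mat 1"
  shows "transpose Y = Y"
proof -
  have "transpose Y = transpose Y ** (X ** Y)" using assms by simp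
  also have "\<dots> = transpose (X ** Y) ** Y"
    by (simp add: matrix_mul_assoc matrix_transpose_mul assms(1))
  also have "\<dots> = Y" using assms by simp
  finally show ?thesis .
qed

definition outer_prod :: "real^'n \<Rightarrow> real^'n^'n" where
  "outer_prod v = (\<chi> i j. v$i * v$j)"

lemma outer_prod_mult_vector: "outer_prod v *v x = (v \<bullet> x) *\<^sub>R v"
  by (simp add: outer_prod_def vec_eq_iff matrix_vector_mult_def inner_vec_def sum_distrib_left mult_ac)

lemma transpose_outer_prod: "transpose (outer_prod v) = outer_prod v"
  by (simp add: outer_prod_def transpose_def vec_eq_iff mult.commute)

lemma symmetric_matrix_inner:
  fixes A :: "real^'n^'n"
  assumes "transpose A = A"
  shows "(A *v x) \<bullet> y = x \<bullet> (A *v y)"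
  by (metis assms dot_lmul_matrix transpose_matrix_vector)

lemma symmetric_matrix_inner_commute:
  fixes A :: "real^'n^'n"
  assumes "transpose A = A"
  shows "x \<bullet> (A *v y) = y \<bullet> (A *v x)"
  using symmetric_matrix_inner[OF assms, of y x] by (simp add: inner_commute)

lemma quadratic_form_add_scaleR:
  fixes A :: "real^'n^'n"
  assumes "transpose A = A"
  shows "(x + t *\<^sub>R y) \<bullet> (A *v (x + t *\<^sub>R y))
    = x \<bullet> (A *v x) + 2 * t * (y \<bullet> (A *v x)) + t^2 * (y \<bullet> (A *v y))"
  using symmetric_matrix_inner_commute[OF assms, of x y]
  by (simp add: algebra_simps inner_add_left inner_add_right power2_eq_square)

subsection \<open>Spectral theorem for symmetric matrices\<close>

lemma quadratic_nonneg_imp_linear_coeff_zero: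
  fixes a b :: real
  assumes "\<And>t. 0 \<le> a * t + b * t^2"
  shows "a = 0"
proof (rule ccontr)
  assume a: "a \<noteq> 0"
  define c where "c = 1 + \<bar>b\<bar>"
  have c: "c > 0" unfolding c_def by simp
  have "a * (- a / c) + b * (- a / c)^2 = a^2 / c^2 * (b - c)"
    using c by (simp add: field_simps power2_eq_square)
  also have "\<dots> < 0"
    using a c by (intro mult_pos_neg) (auto simp: c_def abs_if)
  finally show False using assms[of "- a / c"] by simp
qed

lemma subspace_quadratic_form_maximizer:
  fixes A :: "real^'n^'n"
  assumes V: "subspace V" and "\<not> V \<subseteq> {0}"
  obtains x0 where "x0 \<in> V" "norm x0 = 1"
    "\<And>y. y \<in> V \<Longrightarrow> y \<bullet> (A *v y) \<le> (x0 \<bullet> (A *v x0)) * (y \<bullet> y)"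
proof -
  define K where "K = V \<inter> sphere 0 1"
  obtain z where z: "z \<in> V" "z \<noteq> 0" using assms(2) by auto
  have "compact K" unfolding K_def
    using closed_subspace[OF V] compact_sphere by (simp add: closed_Int_compact)
  moreover have "(1 / norm z) *\<^sub>R z \<in> K"
    unfolding K_def using z V by (auto simp: subspace_scale)
  moreover have "continuous_on K (\<lambda>x. x \<bullet> (A *v x))"
    by (intro continuous_on_inner continuous_on_id linear_continuous_on
        matrix_vector_mul_bounded_linear)
  ultimately obtain x0 where x0: "x0 \<in> K"
    and max: "\<And>y. y \<in> K \<Longrightarrow> y \<bullet> (A *v y) \<le> x0 \<bullet> (A *v x0)"
    using continuous_attains_sup[of K] by blast
  show ?thesis
  proof (rule that)
    show "x0 \<in> V" "norm x0 = 1" using x0 by (auto simp: K_def)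
    fix y assume y: "y \<in> V"
    show "y \<bullet> (A *v y) \<le> (x0 \<bullet> (A *v x0)) * (y \<bullet> y)"
    proof (cases "y = 0")
      case False
      have "(1 / norm y) *\<^sub>R y \<in> K" unfolding K_def using y False V by (auto simp: subspace_scale)
      from max[OF this] have "(y \<bullet> (A *v y)) / (norm y)^2 \<le> x0 \<bullet> (A *v x0)"
        by (simp add: matrix_vector_mult_scaleR power2_eq_square)
      thus ?thesis using False by (simp add: field_simps power2_norm_eq_inner)
    qed simp
  qed
qed

text \<open>For every direction \<open>y\<close> of the subspace, maximality makes the quadratic in \<open>t\<close> coming
  from \<open>x0 + t y\<close> nonnegative, so its linear term vanishes: \<open>A x0 - (x0 \<bullet> A x0) x0\<close> is
  orthogonal to the invariant subspace, which contains it.\<close>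

lemma symmetric_quadratic_form_maximizer_eigenvector:
  fixes A :: "real^'n^'n"
  assumes symA: "transpose A = A" and V: "subspace V" and inv: "\<forall>x\<in>V. A *v x \<in> V"
    and x0: "x0 \<in> V" "norm x0 = 1"
    and max: "\<And>y. y \<in> V \<Longrightarrow> y \<bullet> (A *v y) \<le> (x0 \<bullet> (A *v x0)) * (y \<bullet> y)"
  shows "A *v x0 = (x0 \<bullet> (A *v x0)) *\<^sub>R x0"
proof -
  define l where "l = x0 \<bullet> (A *v x0)"
  have x0x0: "x0 \<bullet> x0 = 1" using x0(2) by (simp add: norm_eq_1)
  have orth: "y \<bullet> (l *\<^sub>R x0 - A *v x0) = 0" if y: "y \<in> V" for y
  proof -
    have "0 \<le> (2 * (l * (x0 \<bullet> y) - y \<bullet> (A *v x0))) * t + (l * (y \<bullet> y) - y \<bullet> (A *v y)) * t^2" for t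
    proof -
      have "x0 + t *\<^sub>R y \<in> V" using x0 y V by (simp add: subspace_add subspace_scale)
      from max[OF this] have
        "l + 2 * t * (y \<bullet> (A *v x0)) + t^2 * (y \<bullet> (A *v y))
          \<le> l * (1 + 2 * t * (x0 \<bullet> y) + t^2 * (y \<bullet> y))"
        unfolding quadratic_form_add_scaleR[OF symA] using x0x0
        by (simp add: l_def inner_commute[of y x0] algebra_simps inner_add_left
            inner_add_right power2_eq_square)
      thus ?thesis by (simp add: algebra_simps)
    qed
    from quadratic_nonneg_imp_linear_coeff_zero[OF this] show ?thesis
      by (simp add: inner_diff_right inner_commute)
  qed
  have "l *\<^sub>R x0 - A *v x0 \<in> V" using x0 inv V by (simp add: subspace_diff subspace_scale)
  from orth[OF this] show ?thesis by (simp add: l_def)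
qed

lemma subspace_subset_span_insert_unit:
  assumes V: "subspace V" and x0: "x0 \<in> V" "x0 \<bullet> x0 = 1" and T: "{y\<in>V. x0 \<bullet> y = 0} \<subseteq> span T"
  shows "V \<subseteq> span (insert x0 T)"
proof
  fix y assume y: "y \<in> V"
  have "y - (x0 \<bullet> y) *\<^sub>R x0 \<in> {y\<in>V. x0 \<bullet> y = 0}"
    using y x0 V by (simp add: subspace_diff subspace_scale inner_diff_right)
  hence "y - (x0 \<bullet> y) *\<^sub>R x0 \<in> span (insert x0 T)"
    using T span_mono[of T "insert x0 T"] by auto
  moreover have "(x0 \<bullet> y) *\<^sub>R x0 \<in> span (insert x0 T)" by (simp add: span_base span_mul)
  ultimately show "y \<in> span (insert x0 T)" using span_add by fastforce
qed

lemma symmetric_invariant_subspace_eigenbasis: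
  fixes A :: "real^'n^'n"
  assumes symA: "transpose A = A"
  shows "subspace V \<Longrightarrow> \<forall>x\<in>V. A *v x \<in> V \<Longrightarrow>
    \<exists>T. finite T \<and> T \<subseteq> V \<and> pairwise orthogonal T \<and>
        (\<forall>v\<in>T. norm v = 1 \<and> A *v v = (v \<bullet> (A *v v)) *\<^sub>R v) \<and> V \<subseteq> span T"
proof (induction "dim V" arbitrary: V rule: less_induct)
  case less
  show ?case
  proof (cases "V \<subseteq> {0}")
    case True
    then show ?thesis by (intro exI[of _ "{}"]) auto
  next
    case False
    obtain x0 where x0: "x0 \<in> V" "norm x0 = 1"
      and max: "\<And>y. y \<in> V \<Longrightarrow> y \<bullet> (A *v y) \<le> (x0 \<bullet> (A *v x0)) * (y \<bullet> y)"
      using subspace_quadratic_form_maximizer[OF less.prems(1) False] by blast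
    define l where "l = x0 \<bullet> (A *v x0)"
    have eig: "A *v x0 = l *\<^sub>R x0"
      using symmetric_quadratic_form_maximizer_eigenvector[OF symA less.prems x0 max]
      unfolding l_def .
    have x0x0: "x0 \<bullet> x0 = 1" using x0(2) by (simp add: norm_eq_1)
    define V' where "V' = {y\<in>V. x0 \<bullet> y = 0}"
    have V': "subspace V'" using less.prems(1) unfolding V'_def subspace_def
      by (auto simp: inner_add_right)
    have inv': "\<forall>x\<in>V'. A *v x \<in> V'"
      using less.prems(2) eig symmetric_matrix_inner[OF symA, of x0, symmetric]
      unfolding V'_def by auto
    have "V' \<subseteq> V" "x0 \<notin> V'" using x0x0 unfolding V'_def by auto
    hence "V' \<subset> V" using x0 by blast
    hence "dim V' < dim V" using V' less.prems(1) by (intro dim_psubset) (metis span_eq_iff)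
    from less.hyps[OF this V' inv'] obtain T where
      T: "finite T" "T \<subseteq> V'" "pairwise orthogonal T"
        "\<forall>v\<in>T. norm v = 1 \<and> A *v v = (v \<bullet> (A *v v)) *\<^sub>R v" "V' \<subseteq> span T" by blast
    show ?thesis
    proof (intro exI[of _ "insert x0 T"] conjI)
      show "finite (insert x0 T)" "insert x0 T \<subseteq> V" using T x0 unfolding V'_def by auto
      show "pairwise orthogonal (insert x0 T)"
        using T unfolding pairwise_insert V'_def orthogonal_def by (auto simp: inner_commute)
      show "\<forall>v\<in>insert x0 T. norm v = 1 \<and> A *v v = (v \<bullet> (A *v v)) *\<^sub>R v"
        using T x0 eig by (auto simp: l_def)
      show "V \<subseteq> span (insert x0 T)"
        using subspace_subset_span_insert_unit[OF less.prems(1) x0(1) x0x0] T(5)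
        unfolding V'_def by blast
    qed
  qed
qed

lemma symmetric_matrix_orthonormal_eigenbasis:
  fixes A :: "real^'n^'n"
  assumes "transpose A = A"
  obtains T where "finite T" "pairwise orthogonal T"
    "\<And>v. v \<in> T \<Longrightarrow> norm v = 1" "\<And>v. v \<in> T \<Longrightarrow> A *v v = (v \<bullet> (A *v v)) *\<^sub>R v"
    "\<And>x. (\<Sum>v\<in>T. (x \<bullet> v) *\<^sub>R v) = x"
proof -
  from symmetric_invariant_subspace_eigenbasis[OF assms, of UNIV] obtain T where
    T: "finite T" "pairwise orthogonal T" "\<forall>v\<in>T. norm v = 1 \<and> A *v v = (v \<bullet> (A *v v)) *\<^sub>R v"
       "UNIV \<subseteq> span T" by auto
  show ?thesis
    by (rule that[OF T(1,2)]) (use T in \<open>auto intro: orthonormal_basis_expand\<close>)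
qed

lemma orthonormal_inner:
  assumes "pairwise orthogonal T" "\<And>v. v \<in> T \<Longrightarrow> norm v = 1" "v \<in> T" "w \<in> T"
  shows "v \<bullet> w = (if v = w then 1 else 0)"
  using assms by (auto simp: pairwise_def orthogonal_def norm_eq_1)

lemma psd_transpose: "psd A \<Longrightarrow> transpose A = A"
  by (simp add: psd_def)

lemma psd_add: "psd A \<Longrightarrow> psd B \<Longrightarrow> psd ((A::real^'n^'n) + B)"
  by (simp add: psd_def transpose_add matrix_vector_mult_add_rdistrib inner_add_right)

lemma psd_scaleR: "psd A \<Longrightarrow> 0 \<le> c \<Longrightarrow> psd (c *\<^sub>R (A::real^'n^'n))"
  by (simp add: psd_def transpose_scalar flip: scaleR_matrix_vector_assoc)

lemma psd_scaleR_mat_1: "0 \<le> c \<Longrightarrow> psd (c *\<^sub>R mat 1 :: real^'n^'n)"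
  by (simp add: psd_def transpose_scalar flip: scaleR_matrix_vector_assoc)

lemma convex_psd_set: "convex (psd_set :: (real^'n^'n) set)"
  unfolding convex_def psd_set_def by (auto intro!: psd_add psd_scaleR)

lemma psd_add_scaleR_mat_1: "psd A \<Longrightarrow> 0 \<le> e \<Longrightarrow> psd (A + e *\<^sub>R mat 1 :: real^'n^'n)"
  by (simp add: psd_add psd_scaleR_mat_1)

lemma invertible_psd_add_scaleR_mat_1:
  fixes A :: "real^'n^'n"
  assumes "psd A" "e > 0"
  shows "invertible (A + e *\<^sub>R mat 1)"
  unfolding invertible_iff_kernel_trivial
proof safe
  fix x assume "(A + e *\<^sub>R mat 1) *v x = 0"
  hence "x \<bullet> (A *v x) + e * (x \<bullet> x) = 0"
    by (metis inner_zero_right matrix_vector_mult_add_rdistrib inner_add_right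
        scaleR_matrix_vector_assoc matrix_vector_mul_lid inner_scaleR_right)
  moreover have "0 \<le> x \<bullet> (A *v x)" using assms by (simp add: psd_def)
  ultimately have "x \<bullet> x = 0" using assms(2)
    by (smt (verit) inner_ge_zero mult_pos_pos)
  thus "x = 0" by simp
qed

lemma psd_congruence:
  fixes A R :: "real^'n^'n"
  assumes "psd A" "transpose R = R"
  shows "psd (R ** A ** R)"
proof -
  have "x \<bullet> ((R ** A ** R) *v x) = (R *v x) \<bullet> (A *v (R *v x))" for x
    using symmetric_matrix_inner[OF assms(2), of x "A *v (R *v x)"]
    by (simp add: matrix_vector_mul_assoc matrix_mul_assoc)
  thus ?thesis using assms psd_transpose[OF assms(1)]
    by (simp add: psd_def matrix_transpose_mul matrix_mul_assoc)
qed

lemma psd_square: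
  fixes B :: "real^'n^'n"
  assumes "transpose B = B"
  shows "psd (B ** B)"
  using psd_congruence[OF psd_scaleR_mat_1[of 1] assms] by simp

lemma psd_inverse:
  fixes X Y :: "real^'n^'n"
  assumes "psd X" "X ** Y = mat 1" "Y ** X = mat 1"
  shows "psd Y"
proof -
  have "0 \<le> x \<bullet> (Y *v x)" for x
  proof -
    have "x \<bullet> (Y *v x) = (Y *v x) \<bullet> (X *v (Y *v x))"
      using assms(2) by (simp add: matrix_vector_mul_assoc inner_commute)
    thus ?thesis using assms(1) by (simp add: psd_def)
  qed
  thus ?thesis using transpose_inverse_eq[OF psd_transpose[OF assms(1)] assms(2,3)]
    by (simp add: psd_def)
qed

lemma closed_psd_set: "closed (psd_set :: (real^'n^'n) set)"
proof -
  have "psd_set = {A. transpose A = A} \<inter> (\<Inter>x. {A::real^'n^'n. 0 \<le> x \<bullet> (A *v x)})"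
    by (auto simp: psd_set_def psd_def)
  also have "closed \<dots>"
    unfolding transpose_def matrix_vector_mult_def
    by (intro closed_Int closed_INT ballI closed_Collect_eq closed_Collect_le continuous_intros)
  finally show ?thesis .
qed

subsection \<open>The positive semidefinite square root\<close>

lemma psd_sqrt_exists:
  fixes A :: "real^'n^'n"
  assumes "psd A"
  shows "\<exists>B. psd B \<and> B ** B = A"
proof -
  obtain T where T: "finite T" "pairwise orthogonal T"
    "\<And>v. v\<in>T \<Longrightarrow> norm v = 1" "\<And>v. v\<in>T \<Longrightarrow> A *v v = (v \<bullet> (A *v v)) *\<^sub>R v"
    "\<And>x. (\<Sum>v\<in>T. (x \<bullet> v) *\<^sub>R v) = x"
    using symmetric_matrix_orthonormal_eigenbasis[OF psd_transpose[OF assms]] by blast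
  define l where "l v = v \<bullet> (A *v v)" for v
  have l0: "0 \<le> l v" for v using assms by (simp add: l_def psd_def)
  have Av: "A *v v = l v *\<^sub>R v" if "v \<in> T" for v using T(4)[OF that] by (simp add: l_def)
  define B where "B = (\<Sum>v\<in>T. sqrt (l v) *\<^sub>R outer_prod v)"
  have Bx: "B *v x = (\<Sum>v\<in>T. (sqrt (l v) * (v \<bullet> x)) *\<^sub>R v)" for x
    unfolding B_def sum_matrix_vector_mult
    by (simp add: outer_prod_mult_vector flip: scaleR_matrix_vector_assoc)
  have Bv: "B *v w = sqrt (l w) *\<^sub>R w" if w: "w \<in> T" for w
  proof -
    have "B *v w = (\<Sum>v\<in>T. if v = w then sqrt (l v) *\<^sub>R v else 0)"
      unfolding Bx using orthonormal_inner[OF T(2,3) _ w] by (intro sum.cong) auto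
    also have "\<dots> = sqrt (l w) *\<^sub>R w" using T(1) w by (simp add: sum.delta')
    finally show ?thesis .
  qed
  have "(B ** B) *v x = A *v x" for x
  proof -
    have "(B ** B) *v x = B *v (B *v x)" by (simp add: matrix_vector_mul_assoc)
    also have "\<dots> = (\<Sum>v\<in>T. (sqrt (l v) * (v \<bullet> x)) *\<^sub>R (B *v v))"
      by (subst Bx[of x]) (simp add: matrix_vector_mult_sum matrix_vector_mult_scaleR)
    also have "\<dots> = (\<Sum>v\<in>T. (x \<bullet> v) *\<^sub>R (A *v v))"
      using l0 by (intro sum.cong) (auto simp: Bv Av inner_commute)
    also have "\<dots> = A *v (\<Sum>v\<in>T. (x \<bullet> v) *\<^sub>R v)"
      unfolding matrix_vector_mult_sum by (simp add: matrix_vector_mult_scaleR)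
    also have "\<dots> = A *v x" using T(5) by simp
    finally show ?thesis .
  qed
  hence "B ** B = A" by (simp add: matrix_eq)
  moreover have "transpose B = B"
    unfolding B_def transpose_sum by (simp add: transpose_scalar transpose_outer_prod)
  moreover have "0 \<le> x \<bullet> (B *v x)" for x
  proof -
    have "x \<bullet> (B *v x) = (\<Sum>v\<in>T. sqrt (l v) * (v \<bullet> x)^2)"
      unfolding Bx by (simp add: inner_sum_right power2_eq_square inner_commute mult_ac)
    also have "\<dots> \<ge> 0" using l0 by (intro sum_nonneg) auto
    finally show ?thesis .
  qed
  ultimately show ?thesis by (auto simp: psd_def)
qed

text \<open>If \<open>B\<^sup>2 = C\<^sup>2\<close> then \<open>D = B - C\<close> satisfies \<open>D(B + C) + (B + C)D = 0\<close>; evaluated at a unit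
  eigenvector \<open>v\<close> of \<open>D\<close> with eigenvalue \<open>m\<close> this gives \<open>m \<cdot> v\<^sup>T(B + C)v = 0\<close>, while
  \<open>m = v\<^sup>TBv - v\<^sup>TCv\<close> and both quadratic forms are nonnegative, so \<open>m = 0\<close>.\<close>

lemma psd_sqrt_unique:
  fixes B C :: "real^'n^'n"
  assumes B: "psd B" and C: "psd C" and BC: "B ** B = C ** C"
  shows "B = C"
proof -
  define D where "D = B - C"
  have symD: "transpose D = D"
    unfolding D_def by (simp add: transpose_diff psd_transpose B C)
  obtain T where T: "finite T" "pairwise orthogonal T"
    "\<And>v. v\<in>T \<Longrightarrow> norm v = 1" "\<And>v. v\<in>T \<Longrightarrow> D *v v = (v \<bullet> (D *v v)) *\<^sub>R v"
    "\<And>x. (\<Sum>v\<in>T. (x \<bullet> v) *\<^sub>R v) = x"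
    using symmetric_matrix_orthonormal_eigenbasis[OF symD] by blast
  have anticomm: "D ** (B + C) + (B + C) ** D = 0"
    using BC unfolding D_def
    by (simp add: matrix_add_ldistrib matrix_add_rdistrib matrix_diff_ldistrib
        matrix_diff_rdistrib algebra_simps)
  have Dv: "D *v v = 0" if v: "v \<in> T" for v
  proof -
    define m where "m = v \<bullet> (D *v v)"
    have eig: "D *v v = m *\<^sub>R v" using T(4)[OF v] by (simp add: m_def)
    have "v \<bullet> ((D ** (B + C)) *v v) = m * (v \<bullet> ((B + C) *v v))"
      using symmetric_matrix_inner[OF symD, of v "(B + C) *v v"]
      by (simp add: matrix_vector_mul_assoc[symmetric] eig)
    moreover have "v \<bullet> (((B + C) ** D) *v v) = m * (v \<bullet> ((B + C) *v v))"
      by (simp add: matrix_vector_mul_assoc[symmetric] eig matrix_vector_mult_scaleR)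
    ultimately have "m * (v \<bullet> (B *v v) + v \<bullet> (C *v v)) = 0"
      using arg_cong[OF anticomm, of "\<lambda>M. v \<bullet> (M *v v)"]
      by (simp add: matrix_vector_mult_add_rdistrib inner_add_right)
    moreover have "0 \<le> v \<bullet> (B *v v)" "0 \<le> v \<bullet> (C *v v)" using B C by (auto simp: psd_def)
    moreover have "m = v \<bullet> (B *v v) - v \<bullet> (C *v v)"
      unfolding m_def D_def by (simp add: matrix_vector_mult_diff_rdistrib inner_diff_right)
    ultimately have "m = 0" by (metis add_nonneg_eq_0_iff diff_self mult_eq_0_iff)
    thus ?thesis using eig by simp
  qed
  have "D *v x = 0" for x
    using T(5)[of x] matrix_vector_mult_sum[of D "\<lambda>v. (x \<bullet> v) *\<^sub>R v" T]
    by (simp add: matrix_vector_mult_scaleR Dv)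
  hence "D = 0" by (simp add: matrix_eq)
  thus ?thesis unfolding D_def by simp
qed

lemma msqrt:
  fixes A :: "real^'n^'n"
  assumes "psd A"
  shows psd_msqrt: "psd (msqrt A)" and msqrt_square: "msqrt A ** msqrt A = A"
proof -
  have "\<exists>!B. psd B \<and> B ** B = A"
    using psd_sqrt_exists[OF assms] psd_sqrt_unique by blast
  hence "psd (msqrt A) \<and> msqrt A ** msqrt A = A" unfolding msqrt_def by (rule theI')
  thus "psd (msqrt A)" "msqrt A ** msqrt A = A" by auto
qed

lemma msqrt_unique:
  fixes A B :: "real^'n^'n"
  assumes "psd B" "B ** B = A"
  shows "msqrt A = B"
  using msqrt[of A] psd_square[OF psd_transpose] psd_sqrt_unique assms by metis

lemma invertible_msqrt:
  fixes A :: "real^'n^'n"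
  assumes "psd A" "invertible A"
  shows "invertible (msqrt A)"
  unfolding invertible_iff_kernel_trivial
proof safe
  fix x assume "msqrt A *v x = 0"
  hence "A *v x = 0" using msqrt_square[OF assms(1)]
    by (metis matrix_vector_mul_assoc matrix_vector_mult_0_right)
  thus "x = 0" using assms(2) by (simp add: invertible_iff_kernel_trivial)
qed

subsection \<open>Continuity of the square root\<close>

lemma continuous_on_matrix_mult [continuous_intros]:
  "continuous_on S f \<Longrightarrow> continuous_on S g \<Longrightarrow>
    continuous_on S (\<lambda>z. (f z :: real^'n^'m) ** (g z :: real^'k^'n))"
  unfolding matrix_matrix_mult_def by (intro continuous_intros)

lemma continuous_on_trace [continuous_intros]:
  "continuous_on S f \<Longrightarrow> continuous_on S (\<lambda>z. trace (f z :: real^'n^'n))"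
  unfolding trace_def by (intro continuous_intros)

lemma norm_squared_eq_trace_square:
  fixes B :: "real^'n^'n"
  assumes "transpose B = B"
  shows "(norm B)^2 = trace (B ** B)"
proof -
  have "(norm B)^2 = (\<Sum>i\<in>UNIV. \<Sum>j\<in>UNIV. (B$i$j)^2)"
    by (simp add: norm_vec_def L2_set_def sum_nonneg)
  also have "\<dots> = (\<Sum>i\<in>UNIV. \<Sum>j\<in>UNIV. B$i$j * B$j$i)"
    using arg_cong[OF assms, of "\<lambda>M. M$_$_"]
    by (simp add: transpose_def power2_eq_square)
  also have "\<dots> = trace (B ** B)" by (simp add: trace_def matrix_matrix_mult_def)
  finally show ?thesis .
qed

lemma trace_le_norm: "trace (A::real^'n^'n) \<le> real CARD('n) * norm A"
proof -
  have "trace A \<le> (\<Sum>i\<in>(UNIV::'n set). norm A)"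
    unfolding trace_def
  proof (rule sum_mono)
    fix i :: 'n
    have "A$i$i \<le> norm (A$i)" using component_le_norm_cart[of "A$i" i] by simp
    also have "\<dots> \<le> norm A" by (rule Finite_Cartesian_Product.norm_nth_le)
    finally show "A$i$i \<le> norm A" .
  qed
  thus ?thesis by simp
qed

lemma norm_msqrt_squared_le:
  fixes A :: "real^'n^'n"
  assumes "psd A"
  shows "(norm (msqrt A))^2 \<le> real CARD('n) * norm A"
  using norm_squared_eq_trace_square[OF psd_transpose[OF psd_msqrt[OF assms]]]
    msqrt_square[OF assms] trace_le_norm[of A]
  by simp

text \<open>On bounded sets of PSD matrices the square root has a closed graph and takes values in a
  compact set, hence is continuous.\<close>

lemma continuous_on_msqrt_cball:
  "continuous_on (psd_set \<inter> cball 0 r) (msqrt :: real^'n^'n \<Rightarrow> _)"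
proof (rule continuous_from_closed_graph)
  define S where "S = psd_set \<inter> cball (0::real^'n^'n) r"
  define T where "T = psd_set \<inter> cball (0::real^'n^'n) (sqrt (real CARD('n) * \<bar>r\<bar>))"
  show "compact T" unfolding T_def
    by (rule closed_Int_compact[OF closed_psd_set compact_cball])
  show "msqrt \<in> S \<rightarrow> T"
  proof
    fix A assume "A \<in> S"
    hence A: "psd A" "norm A \<le> r" by (auto simp: S_def psd_set_def)
    have "(norm (msqrt A))^2 \<le> real CARD('n) * \<bar>r\<bar>"
      using norm_msqrt_squared_le[OF A(1)] A(2)
      by (smt (verit) mult_left_mono of_nat_0_le_iff)
    hence "norm (msqrt A) \<le> sqrt (real CARD('n) * \<bar>r\<bar>)"
      using real_le_rsqrt by blast
    thus "msqrt A \<in> T" using psd_msqrt[OF A(1)] by (simp add: T_def psd_set_def)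
  qed
  have "(\<lambda>x. (x, msqrt x)) ` S = (S \<times> psd_set) \<inter> {p. snd p ** snd p = fst p}"
  proof safe
    fix A assume "A \<in> S"
    thus "msqrt A \<in> psd_set" "snd (A, msqrt A) ** snd (A, msqrt A) = fst (A, msqrt A)"
      using msqrt[of A] by (auto simp: S_def psd_set_def)
  next
    fix A B assume "A \<in> S" "B \<in> psd_set" "snd (A, B) ** snd (A, B) = fst (A, B)"
    hence "msqrt A = B" using msqrt_unique by (auto simp: psd_set_def)
    thus "(A, B) \<in> (\<lambda>x. (x, msqrt x)) ` S" using \<open>A \<in> S\<close> by auto
  qed
  moreover have "closed ((S \<times> psd_set) \<inter> {p. snd p ** snd p = fst p})"
    unfolding S_def
    by (intro closed_Int closed_Times closed_psd_set closed_cball closed_Collect_eq continuous_intros)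
  ultimately show "closed ((\<lambda>x. (x, msqrt x)) ` S)" by simp
qed

lemma continuous_on_msqrt: "continuous_on psd_set (msqrt :: real^'n^'n \<Rightarrow> _)"
  unfolding continuous_on_eq_continuous_within
proof
  fix A :: "real^'n^'n" assume "A \<in> psd_set"
  define r where "r = norm A + 1"
  have "continuous (at A within (psd_set \<inter> cball 0 r)) msqrt"
    using continuous_on_msqrt_cball[of r] \<open>A \<in> psd_set\<close>
    unfolding continuous_on_eq_continuous_within r_def by auto
  moreover have "at A within (psd_set \<inter> cball 0 r) = at A within psd_set"
    by (rule at_within_nhd[of _ "ball 0 r"]) (auto simp: r_def)
  ultimately show "continuous (at A within psd_set) msqrt" by simp
qed

subsection \<open>Concavity of the fidelity\<close>

definition fidelity :: "real^'n^'n \<Rightarrow> real^'n^'n \<Rightarrow> real" where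
  "fidelity A B = trace (msqrt (msqrt B ** A ** msqrt B))"

lemma trace_similar:
  fixes X Y M :: "real^'n^'n"
  assumes "Y ** X = mat 1"
  shows "trace (X ** M ** Y) = trace M"
  by (metis assms matrix_mul_assoc matrix_mul_rid trace_mul_sym)

lemma trace_combination_congruence:
  fixes X A1 A2 :: "real^'n^'n"
  shows "trace (X ** (u *\<^sub>R A1 + v *\<^sub>R A2) ** X) = u * trace (X ** A1 ** X) + v * trace (X ** A2 ** X)"
  by (simp add: matrix_add_ldistrib matrix_add_rdistrib matrix_scalar_ac trace_add trace_scaleR
      flip: scalar_matrix_assoc)

lemma msqrt_inverse:
  fixes B :: "real^'n^'n"
  assumes "psd B" "invertible B"
  obtains Ri where "transpose Ri = Ri" "msqrt B ** Ri = mat 1" "Ri ** msqrt B = mat 1"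
  using invertible_msqrt[OF assms] transpose_inverse_eq[OF psd_transpose[OF psd_msqrt[OF assms(1)]]]
  unfolding invertible_def by blast

text \<open>With \<open>R = B\<^sup>1\<^sup>/\<^sup>2\<close> and \<open>S = (RAR)\<^sup>1\<^sup>/\<^sup>2\<close> the matrix \<open>E = S R\<^sup>-\<^sup>1 X - R Y\<close> satisfies
  \<open>0 \<le> tr (E\<^sup>T E) = tr (XAX) + tr (YBY) - 2 tr S\<close>.\<close>

lemma fidelity_le_trace_congruence:
  fixes A B X Y :: "real^'n^'n"
  assumes A: "psd A" and B: "psd B" "invertible B"
    and sX: "transpose X = X" and sY: "transpose Y = Y" and XY: "X ** Y = mat 1" and YX: "Y ** X = mat 1"
  shows "2 * fidelity A B \<le> trace (X ** A ** X) + trace (Y ** B ** Y)"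
proof -
  define R where "R = msqrt B"
  have sR: "transpose R = R" and RR: "R ** R = B"
    using msqrt[OF B(1)] by (auto simp: R_def psd_transpose)
  obtain Ri where sRi: "transpose Ri = Ri" and RRi: "R ** Ri = mat 1" and RiR: "Ri ** R = mat 1"
    using msqrt_inverse[OF B] unfolding R_def by blast
  define S where "S = msqrt (R ** A ** R)"
  have pRAR: "psd (R ** A ** R)" using psd_congruence[OF A sR] .
  have sS: "transpose S = S" and SS: "S ** S = R ** A ** R"
    using msqrt[OF pRAR] by (auto simp: S_def psd_transpose)
  define E where "E = S ** Ri ** X - R ** Y"
  have "transpose E ** E = ((X ** Ri ** S) ** (S ** Ri ** X) - (X ** Ri ** S) ** (R ** Y))
       - ((Y ** R) ** (S ** Ri ** X) - (Y ** R) ** (R ** Y))"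
    unfolding E_def
    by (simp add: transpose_diff matrix_transpose_mul sX sY sR sRi sS matrix_mul_assoc
        matrix_diff_ldistrib matrix_diff_rdistrib)
  moreover have "(X ** Ri ** S) ** (S ** Ri ** X) = X ** Ri ** (S ** S) ** Ri ** X"
    by (simp add: matrix_mul_assoc)
  moreover have "X ** Ri ** (S ** S) ** Ri ** X = X ** (Ri ** R) ** A ** (R ** Ri) ** X"
    by (simp add: SS matrix_mul_assoc)
  moreover have "trace ((X ** Ri ** S) ** (R ** Y)) = trace (Ri ** S ** R)"
    using trace_similar[OF YX, of "Ri ** S ** R"] by (simp add: matrix_mul_assoc)
  moreover have "trace ((Y ** R) ** (S ** Ri ** X)) = trace (R ** S ** Ri)"
    using trace_similar[OF XY, of "R ** S ** Ri"] by (simp add: matrix_mul_assoc)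
  moreover have "(Y ** R) ** (R ** Y) = Y ** B ** Y"
    by (metis RR matrix_mul_assoc)
  ultimately have "trace (transpose E ** E) = trace (X ** A ** X) + trace (Y ** B ** Y) - 2 * trace S"
    by (simp add: trace_sub RRi RiR trace_similar)
  moreover have "fidelity A B = trace S" by (simp add: fidelity_def S_def R_def)
  ultimately show ?thesis using trace_transpose_mult_self_nonneg[of E] by simp
qed

text \<open>Equality in the previous bound is attained at \<open>X = (R S\<^sup>-\<^sup>1 R)\<^sup>1\<^sup>/\<^sup>2\<close>, where
  \<open>X\<^sup>-\<^sup>2 = R\<^sup>-\<^sup>1 S R\<^sup>-\<^sup>1\<close>.\<close>

lemma fidelity_trace_congruence_attained:
  fixes A B :: "real^'n^'n"
  assumes A: "psd A" "invertible A" and B: "psd B" "invertible B"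
  obtains X Y where "transpose X = X" "transpose Y = Y" "X ** Y = mat 1" "Y ** X = mat 1"
    "trace (X ** A ** X) + trace (Y ** B ** Y) = 2 * fidelity A B"
proof -
  define R where "R = msqrt B"
  have sR: "transpose R = R" and RR: "R ** R = B"
    using msqrt[OF B(1)] by (auto simp: R_def psd_transpose)
  obtain Ri where RRi: "R ** Ri = mat 1" and RiR: "Ri ** R = mat 1"
    using msqrt_inverse[OF B] unfolding R_def by blast
  define S where "S = msqrt (R ** A ** R)"
  have pRAR: "psd (R ** A ** R)" using psd_congruence[OF A(1) sR] .
  have "invertible (R ** A ** R)"
    using invertible_msqrt[OF B] A(2) by (simp add: R_def invertible_mult)
  hence "invertible S" unfolding S_def by (rule invertible_msqrt[OF pRAR])
  then obtain Si where SSi: "S ** Si = mat 1" and SiS: "Si ** S = mat 1"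
    unfolding invertible_def by blast
  have pS: "psd S" and SS: "S ** S = R ** A ** R" using msqrt[OF pRAR] by (auto simp: S_def)
  define Z where "Z = R ** Si ** R"
  have pZ: "psd Z" unfolding Z_def by (rule psd_congruence[OF psd_inverse[OF pS SSi SiS] sR])
  have "invertible Si" using SSi SiS unfolding invertible_def by blast
  hence "invertible Z" using invertible_msqrt[OF B] unfolding Z_def R_def by (simp add: invertible_mult)
  define X where "X = msqrt Z"
  have sX: "transpose X = X" and XX: "X ** X = Z" using msqrt[OF pZ] by (auto simp: X_def psd_transpose)
  have "invertible X" unfolding X_def by (rule invertible_msqrt[OF pZ \<open>invertible Z\<close>])
  then obtain Y where XY: "X ** Y = mat 1" and YX: "Y ** X = mat 1" unfolding invertible_def by blast
  have YY: "Y ** Y = Ri ** S ** Ri"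
  proof -
    have "Z ** (Ri ** S ** Ri) = R ** (Si ** S) ** Ri"
      by (simp add: Z_def matrix_mul_assoc RRi flip: matrix_mul_assoc[of _ R Ri])
    hence Z_inverse: "Z ** (Ri ** S ** Ri) = mat 1" by (simp add: SiS RRi)
    have "Y ** Y ** Z = Y ** (Y ** X) ** X" by (simp add: XX[symmetric] matrix_mul_assoc)
    hence "Y ** Y ** Z = mat 1" by (simp add: YX)
    hence "Y ** Y = (Y ** Y ** Z) ** (Ri ** S ** Ri)"
      by (metis Z_inverse matrix_mul_assoc matrix_mul_rid)
    thus ?thesis using \<open>Y ** Y ** Z = mat 1\<close> by simp
  qed
  have "trace (X ** A ** X) = trace (Si ** (R ** A ** R))"
    by (metis XX Z_def matrix_mul_assoc trace_mul_sym)
  also have "\<dots> = trace S" by (simp only: flip: SS) (simp add: SiS matrix_mul_assoc)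
  finally have tX: "trace (X ** A ** X) = trace S" .
  have "trace (Y ** B ** Y) = trace (R ** R ** (Ri ** S ** Ri))"
    by (metis RR YY matrix_mul_assoc trace_mul_sym)
  also have "R ** R ** (Ri ** S ** Ri) = R ** (R ** Ri) ** S ** Ri" by (simp add: matrix_mul_assoc)
  also have "trace \<dots> = trace S" using trace_similar[OF RiR, of S] by (simp add: RRi)
  finally have tY: "trace (Y ** B ** Y) = trace S" .
  show ?thesis
    by (rule that[OF sX transpose_inverse_eq[OF sX XY YX] XY YX])
      (simp add: tX tY fidelity_def S_def R_def)
qed

lemma fidelity_concave_invertible:
  fixes A1 A2 B1 B2 :: "real^'n^'n"
  assumes A: "psd A1" "psd A2" and B: "psd B1" "psd B2" "invertible B1" "invertible B2"
    and uv: "u \<ge> 0" "v \<ge> 0"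
    and inv: "invertible (u *\<^sub>R A1 + v *\<^sub>R A2)" "invertible (u *\<^sub>R B1 + v *\<^sub>R B2)"
  shows "u * fidelity A1 B1 + v * fidelity A2 B2 \<le> fidelity (u *\<^sub>R A1 + v *\<^sub>R A2) (u *\<^sub>R B1 + v *\<^sub>R B2)"
proof -
  have psd_combination: "psd (u *\<^sub>R A1 + v *\<^sub>R A2)" "psd (u *\<^sub>R B1 + v *\<^sub>R B2)"
    using A B uv by (auto intro!: psd_add psd_scaleR)
  obtain X Y where XY: "transpose X = X" "transpose Y = Y" "X ** Y = mat 1" "Y ** X = mat 1"
    and eq: "trace (X ** (u *\<^sub>R A1 + v *\<^sub>R A2) ** X) + trace (Y ** (u *\<^sub>R B1 + v *\<^sub>R B2) ** Y)
       = 2 * fidelity (u *\<^sub>R A1 + v *\<^sub>R A2) (u *\<^sub>R B1 + v *\<^sub>R B2)"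
    using fidelity_trace_congruence_attained[OF psd_combination(1) inv(1) psd_combination(2) inv(2)]
    by blast
  have "2 * fidelity A1 B1 \<le> trace (X ** A1 ** X) + trace (Y ** B1 ** Y)"
    using fidelity_le_trace_congruence[OF A(1) B(1,3) XY] .
  moreover have "2 * fidelity A2 B2 \<le> trace (X ** A2 ** X) + trace (Y ** B2 ** Y)"
    using fidelity_le_trace_congruence[OF A(2) B(2,4) XY] .
  ultimately have "u * (2 * fidelity A1 B1) + v * (2 * fidelity A2 B2) \<le>
     u * (trace (X ** A1 ** X) + trace (Y ** B1 ** Y)) + v * (trace (X ** A2 ** X) + trace (Y ** B2 ** Y))"
    using uv by (intro add_mono mult_left_mono) auto
  also have "\<dots> = 2 * fidelity (u *\<^sub>R A1 + v *\<^sub>R A2) (u *\<^sub>R B1 + v *\<^sub>R B2)"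
    using eq unfolding trace_combination_congruence by (simp add: algebra_simps)
  finally show ?thesis by simp
qed

lemma continuous_on_fidelity [continuous_intros]:
  assumes "continuous_on S f" "continuous_on S g" "f ` S \<subseteq> psd_set" "g ` S \<subseteq> psd_set"
  shows "continuous_on S (\<lambda>z. fidelity (f z :: real^'n^'n) (g z))"
proof -
  have psd: "psd (f z)" "psd (g z)" if "z \<in> S" for z
    using assms(3,4) that by (auto simp: psd_set_def)
  have "continuous_on S (\<lambda>z. msqrt (g z))"
    by (rule continuous_on_compose2[OF continuous_on_msqrt assms(2,4)])
  hence "continuous_on S (\<lambda>z. msqrt (g z) ** f z ** msqrt (g z))"
    using assms(1) by (intro continuous_intros)
  moreover have "(\<lambda>z. msqrt (g z) ** f z ** msqrt (g z)) ` S \<subseteq> psd_set"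
    using psd by (auto simp: psd_set_def intro!: psd_congruence psd_transpose psd_msqrt)
  ultimately have "continuous_on S (\<lambda>z. msqrt (msqrt (g z) ** f z ** msqrt (g z)))"
    by (rule continuous_on_compose2[OF continuous_on_msqrt])
  thus ?thesis unfolding fidelity_def by (intro continuous_intros)
qed

lemma tendsto_fidelity_add_scaleR_mat_1:
  fixes A B :: "real^'n^'n"
  assumes "psd A" "psd B"
  shows "((\<lambda>e. fidelity (A + e *\<^sub>R mat 1) (B + e *\<^sub>R mat 1)) \<longlongrightarrow> fidelity A B) (at_right 0)"
proof -
  have "continuous_on {0..} (\<lambda>e::real. fidelity (A + e *\<^sub>R mat 1) (B + e *\<^sub>R mat 1))"
    using assms by (intro continuous_intros) (auto simp: psd_set_def intro!: psd_add_scaleR_mat_1)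
  hence "((\<lambda>e. fidelity (A + e *\<^sub>R mat 1) (B + e *\<^sub>R mat 1))
      \<longlongrightarrow> fidelity (A + 0 *\<^sub>R mat 1) (B + 0 *\<^sub>R mat 1)) (at 0 within {0..})"
    unfolding continuous_on_def by (rule bspec) simp
  hence "((\<lambda>e. fidelity (A + e *\<^sub>R mat 1) (B + e *\<^sub>R mat 1)) \<longlongrightarrow> fidelity A B) (at 0 within {0..})"
    by simp
  thus ?thesis by (rule tendsto_within_subset) auto
qed

text \<open>For singular matrices the bounds are obtained in the limit \<open>A + \<epsilon>I\<close>, \<open>B + \<epsilon>I\<close>.\<close>

lemma fidelity_le_trace:
  fixes A B :: "real^'n^'n"
  assumes "psd A" "psd B"
  shows "2 * fidelity A B \<le> trace A + trace B"
proof -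
  have lim_fidelity:
    "((\<lambda>e. 2 * fidelity (A + e *\<^sub>R mat 1) (B + e *\<^sub>R mat 1)) \<longlongrightarrow> 2 * fidelity A B) (at_right 0)"
    by (intro tendsto_mult tendsto_const tendsto_fidelity_add_scaleR_mat_1 assms)
  have lim_trace: "((\<lambda>e. trace (A + e *\<^sub>R mat 1) + trace (B + e *\<^sub>R mat 1)) \<longlongrightarrow> trace A + trace B) (at_right 0)"
    unfolding trace_add trace_scaleR by (auto intro!: tendsto_eq_intros)
  have "\<forall>\<^sub>F e in at_right 0.
      2 * fidelity (A + e *\<^sub>R mat 1) (B + e *\<^sub>R mat 1) \<le> trace (A + e *\<^sub>R mat 1) + trace (B + e *\<^sub>R mat 1)"
    using eventually_at_right_less[of "0::real"]
  proof eventually_elim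
    case (elim e)
    show ?case
      using fidelity_le_trace_congruence[of "A + e *\<^sub>R mat 1" "B + e *\<^sub>R mat 1" "mat 1" "mat 1"]
        elim assms
      by (simp add: psd_add_scaleR_mat_1 invertible_psd_add_scaleR_mat_1)
  qed
  with lim_trace lim_fidelity show ?thesis by (rule tendsto_le[OF trivial_limit_at_right_real])
qed

lemma fidelity_concave:
  fixes A1 A2 B1 B2 :: "real^'n^'n"
  assumes "psd A1" "psd A2" "psd B1" "psd B2" "u \<ge> 0" "v \<ge> 0" "u + v = 1"
  shows "u * fidelity A1 B1 + v * fidelity A2 B2 \<le> fidelity (u *\<^sub>R A1 + v *\<^sub>R A2) (u *\<^sub>R B1 + v *\<^sub>R B2)"
proof -
  let ?A = "u *\<^sub>R A1 + v *\<^sub>R A2" and ?B = "u *\<^sub>R B1 + v *\<^sub>R B2"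
  let ?I = "\<lambda>e::real. e *\<^sub>R mat 1 :: real^'n^'n"
  have psd: "psd ?A" "psd ?B" using assms by (auto intro!: psd_add psd_scaleR)
  have lim_combination: "((\<lambda>e. u * fidelity (A1 + ?I e) (B1 + ?I e) + v * fidelity (A2 + ?I e) (B2 + ?I e))
     \<longlongrightarrow> u * fidelity A1 B1 + v * fidelity A2 B2) (at_right 0)"
    by (intro tendsto_add tendsto_mult tendsto_const tendsto_fidelity_add_scaleR_mat_1 assms)
  have lim_fidelity: "((\<lambda>e. fidelity (?A + ?I e) (?B + ?I e)) \<longlongrightarrow> fidelity ?A ?B) (at_right 0)"
    by (rule tendsto_fidelity_add_scaleR_mat_1[OF psd])
  have "\<forall>\<^sub>F e in at_right 0.
      u * fidelity (A1 + ?I e) (B1 + ?I e) + v * fidelity (A2 + ?I e) (B2 + ?I e)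
      \<le> fidelity (?A + ?I e) (?B + ?I e)"
    using eventually_at_right_less[of "0::real"]
  proof eventually_elim
    case (elim e)
    have "u *\<^sub>R (M1 + ?I e) + v *\<^sub>R (M2 + ?I e) = u *\<^sub>R M1 + v *\<^sub>R M2 + (u + v) *\<^sub>R ?I e"
      for M1 M2 :: "real^'n^'n"
      by (simp add: algebra_simps)
    hence combination: "u *\<^sub>R (M1 + ?I e) + v *\<^sub>R (M2 + ?I e) = u *\<^sub>R M1 + v *\<^sub>R M2 + ?I e"
      for M1 M2 :: "real^'n^'n"
      using assms(7) by simp
    have regular: "psd (M + ?I e)" "invertible (M + ?I e)" if "psd M" for M
      using that elim by (simp_all add: psd_add_scaleR_mat_1 invertible_psd_add_scaleR_mat_1)
    show ?case
      using fidelity_concave_invertible[OF regular(1)[OF assms(1)] regular(1)[OF assms(2)]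
          regular(1)[OF assms(3)] regular(1)[OF assms(4)] regular(2)[OF assms(3)]
          regular(2)[OF assms(4)] assms(5,6)]
        regular(2)[OF psd(1)] regular(2)[OF psd(2)]
      unfolding combination by blast
  qed
  with lim_fidelity lim_combination show ?thesis
    by (rule tendsto_le[OF trivial_limit_at_right_real])
qed

lemma gelbrich_squared:
  fixes S1 S2 :: "real^'n^'n"
  assumes "psd S1" "psd S2"
  shows "(gelbrich (m1, S1) (m2, S2))^2
    = (norm (m1 - m2))^2 + trace S1 + trace S2 - 2 * fidelity S1 S2"
proof -
  have "0 \<le> (norm (m1 - m2))^2 + trace S1 + trace S2 - 2 * fidelity S1 S2"
    using fidelity_le_trace[OF assms] zero_le_power2[of "norm (m1 - m2)"] by linarith
  thus ?thesis
    by (simp add: gelbrich_def trace_add trace_sub trace_scaleR fidelity_def)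
qed

lemma power2_norm_convex:
  fixes a b :: "'a::real_inner"
  assumes "u \<ge> 0" "v \<ge> 0" "u + v = 1"
  shows "(norm (u *\<^sub>R a + v *\<^sub>R b))^2 \<le> u * (norm a)^2 + v * (norm b)^2"
proof -
  have "v = 1 - u" using assms(3) by simp
  have "u * (norm a)^2 + v * (norm b)^2 - (norm (u *\<^sub>R a + v *\<^sub>R b))^2 = u * v * (norm (a - b))^2"
    unfolding power2_norm_eq_inner \<open>v = 1 - u\<close>
    by (simp add: inner_add_left inner_add_right inner_diff_left inner_diff_right
        inner_commute[of b a] algebra_simps power2_eq_square)
  thus ?thesis using assms by (smt (verit) mult_nonneg_nonneg zero_le_power2)
qed

lemma convex_on_gelbrich_squared:
  "convex_on (UNIV \<times> UNIV \<times> psd_set \<times> psd_set)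
    (\<lambda>(m1, m2, S1, S2). (gelbrich (m1, S1) (m2, S2 :: real^'n^'n))\<^sup>2)"
  unfolding convex_on_def
proof (intro conjI ballI allI impI)
  show "convex (UNIV \<times> UNIV \<times> psd_set \<times> (psd_set :: (real^'n^'n) set))"
    by (intro convex_Times convex_UNIV convex_psd_set)
  fix x y :: "(real^'n) \<times> (real^'n) \<times> (real^'n^'n) \<times> (real^'n^'n)" and u v :: real
  assume x: "x \<in> UNIV \<times> UNIV \<times> psd_set \<times> psd_set" and y: "y \<in> UNIV \<times> UNIV \<times> psd_set \<times> psd_set"
    and uv: "0 \<le> u" "0 \<le> v" "u + v = 1"
  obtain a1 a2 A1 A2 where xe: "x = (a1, a2, A1, A2)" and A: "psd A1" "psd A2"
    using x by (cases x) (auto simp: psd_set_def)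
  obtain b1 b2 B1 B2 where ye: "y = (b1, b2, B1, B2)" and B: "psd B1" "psd B2"
    using y by (cases y) (auto simp: psd_set_def)
  have "(u *\<^sub>R a1 + v *\<^sub>R b1) - (u *\<^sub>R a2 + v *\<^sub>R b2) = u *\<^sub>R (a1 - a2) + v *\<^sub>R (b1 - b2)"
    by (simp add: algebra_simps)
  hence "(norm ((u *\<^sub>R a1 + v *\<^sub>R b1) - (u *\<^sub>R a2 + v *\<^sub>R b2)))^2
      \<le> u * (norm (a1 - a2))^2 + v * (norm (b1 - b2))^2"
    using power2_norm_convex[OF uv] by simp
  moreover have "u * fidelity A1 A2 + v * fidelity B1 B2
      \<le> fidelity (u *\<^sub>R A1 + v *\<^sub>R B1) (u *\<^sub>R A2 + v *\<^sub>R B2)"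
    using fidelity_concave[OF A(1) B(1) A(2) B(2) uv] .
  moreover have "psd (u *\<^sub>R A1 + v *\<^sub>R B1)" "psd (u *\<^sub>R A2 + v *\<^sub>R B2)"
    using A B uv by (auto intro!: psd_add psd_scaleR)
  ultimately show "(case u *\<^sub>R x + v *\<^sub>R y of (m1, m2, S1, S2) \<Rightarrow> (gelbrich (m1, S1) (m2, S2))\<^sup>2)
      \<le> u * (case x of (m1, m2, S1, S2) \<Rightarrow> (gelbrich (m1, S1) (m2, S2))\<^sup>2)
       + v * (case y of (m1, m2, S1, S2) \<Rightarrow> (gelbrich (m1, S1) (m2, S2))\<^sup>2)"
    using A B uv by (simp add: xe ye gelbrich_squared trace_add trace_scaleR algebra_simps)
qed

lemma continuous_on_gelbrich_squared:
  "continuous_on (UNIV \<times> UNIV \<times> psd_set \<times> psd_set)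
    (\<lambda>(m1, m2, S1, S2). (gelbrich (m1, S1) (m2, S2 :: real^'n^'n))\<^sup>2)"
proof -
  let ?D = "UNIV \<times> UNIV \<times> psd_set \<times> psd_set :: ((real^'n) \<times> (real^'n) \<times> (real^'n^'n) \<times> (real^'n^'n)) set"
  have "continuous_on ?D (\<lambda>p. (norm (fst p - fst (snd p)))^2 + trace (fst (snd (snd p)))
      + trace (snd (snd (snd p))) - 2 * fidelity (fst (snd (snd p))) (snd (snd (snd p))))"
    by (intro continuous_intros) auto
  moreover have "(\<lambda>(m1, m2, S1, S2). (gelbrich (m1, S1) (m2, S2))\<^sup>2) p
      = (norm (fst p - fst (snd p)))^2 + trace (fst (snd (snd p))) + trace (snd (snd (snd p)))
        - 2 * fidelity (fst (snd (snd p))) (snd (snd (snd p)))" if "p \<in> ?D" for p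
    using that by (auto simp: psd_set_def gelbrich_squared)
  ultimately show ?thesis by (simp cong: continuous_on_cong)
qed

theorem mainTheorem2:
  fixes f :: "(real^'n) \<times> (real^'n) \<times> (real^'n^'n) \<times> (real^'n^'n) \<Rightarrow> real"
  defines "f \<equiv> (\<lambda>(m1, m2, S1, S2). (gelbrich (m1, S1) (m2, S2))\<^sup>2)"
  shows "convex_on (UNIV \<times> UNIV \<times> psd_set \<times> psd_set) f
         \<and> continuous_on (UNIV \<times> UNIV \<times> psd_set \<times> psd_set) f"
  unfolding f_def using convex_on_gelbrich_squared continuous_on_gelbrich_squared by blast

end
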